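(* Let $P_\infty=u_1,u_2,\dots$ be the one-way infinite path, with initial configuration $c_0(u_1)=1$ and $c_0(u_i)=2$ for $i\geq2$ (each vertex gets as many chips as its degree). Then for every $k\geq0$: the sequence $(c_{2k}(u_i))_{i\geq1}$ is the word consisting of $k$ copies of the block $1,3$, followed by $1$, followed by $2,2,2,\dots$; and the sequence $(c_{2k+1}(u_i))_{i\ge1}$ is $2$, followed by $k$ copies of the block $1,3$, followed by $1$, followed by $2,2,2,\dots$.
   Context: Diffusion process: for a configuration $c_t$, $c_{t+1}(w)=c_t(w)-|\{x\in N(w): c_t(w)>c_t(x)\}|+|\{x\in N(w): c_t(w)<c_t(x)\}|$ for all vertices $w$ simultaneously (every vertex sends one chip to each neighbour with strictly fewer chips). *)

theory Defs
  imports Main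
begin

definition diffusion_step :: "('v \<Rightarrow> 'v set) \<Rightarrow> ('v \<Rightarrow> int) \<Rightarrow> ('v \<Rightarrow> int)" where
  "diffusion_step N c = (\<lambda>w. c w - int (card {x \<in> N w. c w > c x})
                                 + int (card {x \<in> N w. c w < c x}))"

definition diffusion :: "('v \<Rightarrow> 'v set) \<Rightarrow> ('v \<Rightarrow> int) \<Rightarrow> nat \<Rightarrow> ('v \<Rightarrow> int)" where
  "diffusion N c0 t = (diffusion_step N ^^ t) c0"

text \<open>The one-way infinite path u_1,u_2,...; vertex u_(i+1) is represented by the
natural number i, so the neighbours of i are i-1 (if i>0) and i+1.\<close>
definition path_nbrs :: "nat \<Rightarrow> nat set" where
  "path_nbrs i = {j. j = i + 1 \<or> i = j + 1}"

definition path_c0 :: "nat \<Rightarrow> int" where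
  "path_c0 i = (if i = 0 then 1 else 2)"

definition word_then_twos :: "int list \<Rightarrow> nat \<Rightarrow> int" where
  "word_then_twos xs i = (if i < length xs then xs ! i else 2)"

end

theory Submission
  imports Defs
begin

text \<open>At time \<open>2k\<close> the path carries the alternating block \<open>1,3,\<dots>,3,1\<close> of length
  \<open>2k + 1\<close> followed by twos, and at time \<open>2k + 1\<close> the same block shifted right by a
  leading 2. One diffusion step maps each of these shapes to the next one. Since every
  vertex compares itself only with its at most two neighbours, this is a finite case
  check on the position of the vertex relative to the end of the block.\<close>

lemma diffusion_step_eq_sum_sgn:
  assumes "finite (N w)"
  shows "diffusion_step N c w = c w + (\<Sum>x\<in>N w. sgn (c x - c w))"
proof -
  have "sgn (c x - c w) = of_bool (c w < c x) - of_bool (c x < c w)" for x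
    by (simp add: sgn_if)
  then have "(\<Sum>x\<in>N w. sgn (c x - c w))
      = int (card (N w \<inter> {x. c w < c x})) - int (card (N w \<inter> {x. c x < c w}))"
    using assms by (simp add: sum_subtractf)
  moreover have "N w \<inter> {x. P x} = {x \<in> N w. P x}" for P by blast
  ultimately show ?thesis
    by (simp add: diffusion_step_def)
qed

lemma path_nbrs_0: "path_nbrs 0 = {1}"
  by (auto simp: path_nbrs_def)

lemma path_nbrs_Suc: "path_nbrs (Suc i) = {i, Suc (Suc i)}"
  by (auto simp: path_nbrs_def)

lemma path_step_0:
  "diffusion_step path_nbrs c 0 = c 0 + sgn (c 1 - c 0)"
  by (simp add: diffusion_step_eq_sum_sgn path_nbrs_0)

lemma path_step_Suc:
  "diffusion_step path_nbrs c (Suc i)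
     = c (Suc i) + sgn (c i - c (Suc i)) + sgn (c (Suc (Suc i)) - c (Suc i))"
  by (simp add: diffusion_step_eq_sum_sgn path_nbrs_Suc)

definition path_even_config :: "nat \<Rightarrow> nat \<Rightarrow> int" where
  "path_even_config k i = (if i \<le> 2 * k then (if even i then 1 else 3) else 2)"

definition path_odd_config :: "nat \<Rightarrow> nat \<Rightarrow> int" where
  "path_odd_config k i = (if i = 0 then 2 else path_even_config k (i - 1))"

lemma path_even_config_0: "path_even_config 0 = path_c0"
  by (auto simp: path_even_config_def path_c0_def)

lemma diffusion_step_path_even_config:
  "diffusion_step path_nbrs (path_even_config k) = path_odd_config k"
proof
  fix i
  show "diffusion_step path_nbrs (path_even_config k) i = path_odd_config k i"
    by (cases i)
      (auto simp: path_step_0 path_step_Suc path_even_config_def path_odd_config_def)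
qed

lemma diffusion_step_path_odd_config:
  "diffusion_step path_nbrs (path_odd_config k) = path_even_config (Suc k)"
proof
  fix i
  show "diffusion_step path_nbrs (path_odd_config k) i = path_even_config (Suc k) i"
  proof (cases i)
    case 0
    then show ?thesis
      by (simp add: path_step_0 path_even_config_def path_odd_config_def)
  next
    case (Suc j)
    then show ?thesis
      by (cases j)
        (auto simp: path_step_Suc path_even_config_def path_odd_config_def)
  qed
qed

lemma diffusion_Suc:
  "diffusion N c0 (Suc t) = diffusion_step N (diffusion N c0 t)"
  by (simp add: diffusion_def)

lemma diffusion_path_c0:
  "diffusion path_nbrs path_c0 (2 * k) = path_even_config k
 \<and> diffusion path_nbrs path_c0 (2 * k + 1) = path_odd_config k"
proof (induction k)
  case 0
  show ?case
    by (simp add: diffusion_def path_even_config_0 [symmetric]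
        diffusion_step_path_even_config)
next
  case (Suc k)
  then have "diffusion path_nbrs path_c0 (2 * Suc k) = path_even_config (Suc k)"
    by (simp add: diffusion_Suc diffusion_step_path_even_config
        diffusion_step_path_odd_config)
  then show ?case
    by (simp add: diffusion_Suc diffusion_step_path_even_config)
qed

lemma word_then_twos_Cons_Suc:
  "word_then_twos (x # xs) (Suc i) = word_then_twos xs i"
  by (simp add: word_then_twos_def)

lemma word_then_twos_alternating_eq_path_even_config:
  "word_then_twos (concat (replicate k [1, 3]) @ [1]) = path_even_config k"
proof
  fix i
  show "word_then_twos (concat (replicate k [1, 3]) @ [1]) i = path_even_config k i"
  proof (induction k arbitrary: i)
    case 0
    then show ?case
      by (auto simp: word_then_twos_def path_even_config_def)
  next
    case (Suc k)
    show ?case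
    proof (cases "i < 2")
      case True
      then show ?thesis
        by (auto simp: word_then_twos_def path_even_config_def less_2_cases_iff)
    next
      case False
      then obtain m where "i = Suc (Suc m)"
        by (metis add_2_eq_Suc le_Suc_ex not_less)
      with Suc.IH [of m] show ?thesis
        by (simp add: word_then_twos_Cons_Suc path_even_config_def)
    qed
  qed
qed

lemma word_then_twos_Cons_2_alternating_eq_path_odd_config:
  "word_then_twos ([2] @ concat (replicate k [1, 3]) @ [1]) = path_odd_config k"
proof
  fix i
  show "word_then_twos ([2] @ concat (replicate k [1, 3]) @ [1]) i = path_odd_config k i"
  proof (cases i)
    case 0
    then show ?thesis
      by (simp add: word_then_twos_def path_odd_config_def)
  next
    case (Suc j)
    then show ?thesis
      by (simp add: word_then_twos_Cons_Suc path_odd_config_def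
          word_then_twos_alternating_eq_path_even_config)
  qed
qed

theorem lemma15:
  fixes k :: nat
  shows "diffusion path_nbrs path_c0 (2 * k)
           = word_then_twos (concat (replicate k [1, 3]) @ [1])
       \<and> diffusion path_nbrs path_c0 (2 * k + 1)
           = word_then_twos ([2] @ concat (replicate k [1, 3]) @ [1])"
  using diffusion_path_c0 word_then_twos_alternating_eq_path_even_config
    word_then_twos_Cons_2_alternating_eq_path_odd_config
  by simp

end
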